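(* Let \[ r=\frac{1}{4} \left( -1 + \sqrt{33} - \sqrt{2 \left(9 - \sqrt{33} \right)} \right). \] Then \[ 3 \operatorname{Li}_{2}(r^6) + 3 \operatorname{Li}_{2}(r^4) - 8 \operatorname{Li}_{2}(r^3) - 33 \operatorname{Li}_{2}(r^2) + 24 \operatorname{Li}_{2}(r) - \zeta(2) = 6 \log^2(r). \]
   Context: $\operatorname{Li}_2(x)=\sum_{n\ge1}x^n/n^2$ is the dilogarithm and $\zeta(2)=\pi^2/6$. *)

theory Defs
  imports "HOL-Analysis.Analysis"
begin

definition Li2 :: "real \<Rightarrow> real" where
  "Li2 x = (\<Sum>n. x ^ Suc n / (real (Suc n))\<^sup>2)"

definition zeta2 :: real where
  "zeta2 = pi\<^sup>2 / 6"

end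

(* The Rogers dilogarithm L(x) = Li2(x) + ln x ln(1 - x) / 2 satisfies, on (0,1), the reflection
   L(x) + L(1 - x) = pi^2/6 and Abel's five-term relation; both follow by differentiating in one
   variable and letting it tend to 0.
   The number r is the root in (0,1) of x^4 + x^3 - 6x^2 + x + 1, i.e. r + 1/r = (sqrt 33 - 1)/2.
   Thirty reflections and fifty-eight five-term relations, with all arguments in Q(r) and checked by
   arithmetic modulo the quartic, combine to 3 L(r^6) + 3 L(r^4) - 8 L(r^3) - 33 L(r^2) + 24 L(r) = pi^2/6.
   Going back to Li2, the correction terms ln(r^k) ln(1 - r^k) add up to 6 ln^2 r because of the
   multiplicative relation r^2 (1 - r^6)^3 (1 - r^4)^2 (1 - r)^4 = (1 - r^3)^4 (1 - r^2)^11. *)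

theory Submission
  imports Defs "HOL-Real_Asymp.Real_Asymp"
begin

section \<open>The dilogarithm and the Rogers dilogarithm\<close>

lemma power_div_Suc_sums:
  fixes x :: real
  assumes "x \<noteq> 0" "\<bar>x\<bar> < 1"
  shows "(\<lambda>n. x ^ n / real (Suc n)) sums (- ln (1 - x) / x)"
proof -
  have "(\<lambda>n. - ((- (- x)) ^ n) / real n) sums ln (1 + - x)"
    by (rule ln_series') (use assms in simp)
  hence "(\<lambda>n. - (x ^ Suc n) / real (Suc n)) sums ln (1 - x)"
    by (subst sums_Suc_iff) simp
  hence "(\<lambda>n. - (x ^ Suc n) / real (Suc n) / (- x)) sums (ln (1 - x) / (- x))"
    by (rule sums_divide)
  thus ?thesis
    using assms(1) by (simp add: field_simps del: of_nat_Suc)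
qed

lemma Li2_has_real_derivative:
  assumes "x \<noteq> 0" "\<bar>x\<bar> < 1"
  shows "(Li2 has_real_derivative - ln (1 - x) / x) (at x)"
proof -
  have "summable (\<lambda>n. 1 / (real (Suc n))\<^sup>2 * real (Suc n) * z ^ n)" if "z \<in> {-1<..<1}" for z :: real
  proof (rule summable_comparison_test'[where N = 0])
    show "summable (\<lambda>n. \<bar>z\<bar> ^ n)"
      using that by (intro summable_geometric) auto
    show "norm (1 / (real (Suc n))\<^sup>2 * real (Suc n) * z ^ n) \<le> \<bar>z\<bar> ^ n" for n
      by (simp add: power2_eq_square abs_mult power_abs divide_le_eq mult_le_cancel_left1
          del: of_nat_Suc)
  qed
  hence "((\<lambda>x. \<Sum>n. 1 / (real (Suc n))\<^sup>2 * x ^ Suc n) has_real_derivative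
           (\<Sum>n. 1 / (real (Suc n))\<^sup>2 * real (Suc n) * x ^ n)) (at x)"
    using assms by (intro DERIV_power_series'[where R = 1]) auto
  hence "(Li2 has_real_derivative (\<Sum>n. 1 / (real (Suc n))\<^sup>2 * real (Suc n) * x ^ n)) (at x)"
    by (simp add: Li2_def[abs_def])
  moreover have "(\<lambda>n. 1 / (real (Suc n))\<^sup>2 * real (Suc n) * x ^ n) = (\<lambda>n. x ^ n / real (Suc n))"
    by (simp add: power2_eq_square field_simps del: of_nat_Suc)
  ultimately show ?thesis
    using power_div_Suc_sums[OF assms] by (simp add: sums_iff)
qed

lemma continuous_on_Li2: "continuous_on {-1..1} Li2"
proof -
  have "uniform_limit {-1..1} (\<lambda>n x. \<Sum>i<n. x ^ Suc i / (real (Suc i))\<^sup>2) Li2 sequentially"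
    unfolding Li2_def[abs_def]
  proof (rule Weierstrass_m_test)
    show "norm (x ^ Suc i / (real (Suc i))\<^sup>2) \<le> 1 / (real (Suc i))\<^sup>2" if "x \<in> {-1..1}" for i x
    proof -
      have "\<bar>x\<bar> ^ Suc i \<le> 1"
        using that by (intro power_le_one) auto
      thus ?thesis
        by (simp add: power_abs abs_divide divide_right_mono del: of_nat_Suc power_Suc)
    qed
    show "summable (\<lambda>i. 1 / (real (Suc i))\<^sup>2)"
      using inverse_squares_sums by (simp add: sums_iff add.commute)
  qed
  thus ?thesis
    by (intro uniform_limit_theorem) (auto intro!: always_eventually continuous_intros)
qed

lemma Li2_1: "Li2 1 = pi\<^sup>2 / 6"
  using inverse_squares_sums by (simp add: Li2_def sums_iff add.commute)

definition rogers_dilog :: "real \<Rightarrow> real" where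
  "rogers_dilog x = Li2 x + ln x * ln (1 - x) / 2"

lemma rogers_dilog_has_real_derivative:
  assumes "0 < x" "x < 1"
  shows "(rogers_dilog has_real_derivative - (ln (1 - x) / x + ln x / (1 - x)) / 2) (at x)"
  unfolding rogers_dilog_def[abs_def] using assms
  by (auto intro!: derivative_eq_intros Li2_has_real_derivative simp: field_simps)

lemma has_real_derivative_rogers_dilog_compose:
  assumes "(f has_real_derivative f') (at y)" "0 < f y" "f y < 1"
    and "f' / f y = a" "- f' / (1 - f y) = b"
  shows "((\<lambda>y. rogers_dilog (f y)) has_real_derivative (ln (f y) * b - ln (1 - f y) * a) / 2) (at y)"
proof -
  have "- (ln (1 - f y) / f y + ln (f y) / (1 - f y)) / 2 * f' = (ln (f y) * b - ln (1 - f y) * a) / 2"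
    unfolding assms(4,5)[symmetric] by (simp add: algebra_simps)
  thus ?thesis
    using DERIV_chain2[OF rogers_dilog_has_real_derivative assms(1)] assms(2,3) by simp
qed

lemma tendsto_rogers_dilog_at_right_0: "(rogers_dilog \<longlongrightarrow> 0) (at_right 0)"
proof -
  have "(Li2 \<longlongrightarrow> Li2 0) (at 0 within {0..1})"
    using continuous_on_subset[OF continuous_on_Li2, of "{0..1}"] by (simp add: continuous_on_def)
  hence "(Li2 \<longlongrightarrow> 0) (at_right 0)"
    by (simp add: at_within_Icc_at_right Li2_def)
  moreover have "((\<lambda>x::real. ln x * ln (1 - x)) \<longlongrightarrow> 0) (at_right 0)"
    by real_asymp
  ultimately show ?thesis
    unfolding rogers_dilog_def[abs_def] using tendsto_add tendsto_divide_zero by fastforce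
qed

lemma tendsto_rogers_dilog_at_left_1: "(rogers_dilog \<longlongrightarrow> pi\<^sup>2 / 6) (at_left 1)"
proof -
  have "(Li2 \<longlongrightarrow> Li2 1) (at 1 within {0..1})"
    using continuous_on_subset[OF continuous_on_Li2, of "{0..1}"] by (simp add: continuous_on_def)
  hence "(Li2 \<longlongrightarrow> Li2 1) (at_left 1)"
    by (simp add: at_within_Icc_at_left)
  moreover have "((\<lambda>x::real. ln x * ln (1 - x)) \<longlongrightarrow> 0) (at_left 1)"
    by real_asymp
  ultimately show ?thesis
    unfolding rogers_dilog_def[abs_def] Li2_1 using tendsto_add tendsto_divide_zero by fastforce
qed

section \<open>Reflection and five-term relation\<close>

lemma has_real_derivative_zero_imp_eq_limit:
  fixes g :: "real \<Rightarrow> real"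
  assumes "\<And>t. a < t \<Longrightarrow> t < b \<Longrightarrow> (g has_real_derivative 0) (at t)"
    and "(g \<longlongrightarrow> c) (at_right a)" and "a < y" "y < b"
  shows "g y = c"
proof -
  obtain d where d: "\<forall>t\<in>{a<..<b}. g t = d"
    using has_field_derivative_zero_constant[of "{a<..<b}" g] assms(1)
    by (auto intro: has_field_derivative_at_within)
  have "eventually (\<lambda>t. g t = d) (at_right a)"
    using eventually_at_right_real[OF \<open>a < y\<close>] \<open>y < b\<close> d
    by (auto elim!: eventually_mono)
  hence "(g \<longlongrightarrow> d) (at_right a)"
    by (rule tendsto_eventually)
  hence "d = c"
    using assms(2) by (rule tendsto_unique[rotated]) simp
  thus ?thesis
    using d assms(3,4) by auto
qed

lemma tendsto_rogers_dilog_compose_0: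
  assumes "(f \<longlongrightarrow> 0) F" "eventually (\<lambda>t. 0 < f t) F"
  shows "((\<lambda>t. rogers_dilog (f t)) \<longlongrightarrow> 0) F"
  using tendsto_rogers_dilog_at_right_0 tendsto_imp_filterlim_at_right[OF assms]
  by (rule filterlim_compose)

lemma rogers_dilog_reflection:
  assumes "0 < x" "x < 1"
  shows "rogers_dilog x + rogers_dilog (1 - x) = pi\<^sup>2 / 6"
proof -
  define g where "g t = rogers_dilog t + rogers_dilog (1 - t)" for t
  have "filterlim (\<lambda>t::real. 1 - t) (at_left 1) (at_right 0)"
    by real_asymp
  hence "((\<lambda>t. rogers_dilog (1 - t)) \<longlongrightarrow> pi\<^sup>2 / 6) (at_right 0)"
    using tendsto_rogers_dilog_at_left_1 by (rule filterlim_compose[rotated])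
  hence "(g \<longlongrightarrow> pi\<^sup>2 / 6) (at_right 0)"
    unfolding g_def using tendsto_add[OF tendsto_rogers_dilog_at_right_0] by fastforce
  moreover have "(g has_real_derivative 0) (at t)" if "0 < t" "t < 1" for t
  proof -
    have "(g has_real_derivative (ln t * (- 1 / (1 - t)) - ln (1 - t) * (1 / t)) / 2
                                + (ln (1 - t) * (1 / t) - ln (1 - (1 - t)) * (- 1 / (1 - t))) / 2) (at t)"
      unfolding g_def using that
      by (intro DERIV_add has_real_derivative_rogers_dilog_compose[OF DERIV_ident]
          has_real_derivative_rogers_dilog_compose[OF DERIV_diff[OF DERIV_const DERIV_ident]]) auto
    thus ?thesis
      by (rule DERIV_cong) (simp add: field_simps)
  qed
  ultimately have "g x = pi\<^sup>2 / 6"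
    using assms by (intro has_real_derivative_zero_imp_eq_limit[where a = 0 and b = 1])
  thus ?thesis
    by (simp add: g_def)
qed

lemma five_term_arguments:
  fixes x t :: real
  assumes "0 < x" "x < 1" "0 < t" "t < 1"
  defines "w \<equiv> 1 - x * t"
  shows "0 < w" "1 - x * (1 - t) / w = (1 - x) / w" "1 - t * (1 - x) / w = (1 - t) / w"
    "0 < x * (1 - t) / w" "x * (1 - t) / w < 1" "0 < t * (1 - x) / w" "t * (1 - x) / w < 1"
proof -
  have "x * t < x * 1"
    using assms(1,4) by (rule mult_strict_left_mono[rotated])
  thus "0 < w"
    unfolding w_def using assms(2) by linarith
  thus "1 - x * (1 - t) / w = (1 - x) / w" "1 - t * (1 - x) / w = (1 - t) / w"
    unfolding w_def by (simp_all add: field_simps)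
  moreover have "0 < (1 - x) / w" "0 < (1 - t) / w" "0 < x * (1 - t) / w" "0 < t * (1 - x) / w"
    using assms(1-4) \<open>0 < w\<close> by simp_all
  ultimately show "0 < x * (1 - t) / w" "x * (1 - t) / w < 1" "0 < t * (1 - x) / w" "t * (1 - x) / w < 1"
    by linarith+
qed

lemma five_term_defect_has_derivative_zero:
  assumes x: "0 < x" "x < 1" and t: "0 < t" "t < 1"
  shows "((\<lambda>t. rogers_dilog x + rogers_dilog t - rogers_dilog (x * t)
            - rogers_dilog (x * (1 - t) / (1 - x * t)) - rogers_dilog (t * (1 - x) / (1 - x * t)))
          has_real_derivative 0) (at t)"
proof -
  define u where "u s = x * (1 - s) / (1 - x * s)" for s
  define v where "v s = s * (1 - x) / (1 - x * s)" for s
  define w where "w = 1 - x * t"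
  have uv: "u t = x * (1 - t) / w" "v t = t * (1 - x) / w"
    by (simp_all add: u_def v_def w_def)
  note args = five_term_arguments[OF x t, folded w_def, folded uv]
  have nz: "x \<noteq> 0" "t \<noteq> 0" "1 - x \<noteq> 0" "1 - t \<noteq> 0" "w \<noteq> 0"
    using x t args(1) by auto
  have logs: "ln (x * t) = ln x + ln t"
      "ln (u t) = ln x + ln (1 - t) - ln w" "ln (1 - u t) = ln (1 - x) - ln w"
      "ln (v t) = ln t + ln (1 - x) - ln w" "ln (1 - v t) = ln (1 - t) - ln w"
    unfolding args(2,3) unfolding uv using x t args(1) by (simp_all add: ln_mult ln_div)
  define du where "du = - x * (1 - x) / w\<^sup>2"
  define dv where "dv = (1 - x) / w\<^sup>2"
  have derivs: "((\<lambda>t. x * t) has_real_derivative x) (at t)"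
    "(u has_real_derivative du) (at t)" "(v has_real_derivative dv) (at t)"
    unfolding u_def v_def du_def dv_def w_def using nz(5)
    by (auto intro!: derivative_eq_intros simp: w_def field_simps power2_eq_square)
  define dT where "dT = 1 / t"
  define dP where "dP = - 1 / (1 - t)"
  define dW where "dW = - x / w"
  have quotients: "1 / t = dT" "- 1 / (1 - t) = dP" "x / (x * t) = dT" "- x / (1 - x * t) = dW"
      "du / u t = dP - dW" "- du / (1 - u t) = - dW" "dv / v t = dT - dW" "- dv / (1 - v t) = dP - dW"
    unfolding args(2,3) unfolding uv du_def dv_def dT_def dP_def dW_def using nz
    by (simp_all add: field_simps power2_eq_square) (simp_all add: w_def algebra_simps)
  have "((\<lambda>t. rogers_dilog x + rogers_dilog t - rogers_dilog (x * t) - rogers_dilog (u t)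
           - rogers_dilog (v t)) has_real_derivative
         0 + (ln t * dP - ln (1 - t) * dT) / 2
         - (ln (x * t) * dW - ln (1 - x * t) * dT) / 2
         - (ln (u t) * (- dW) - ln (1 - u t) * (dP - dW)) / 2
         - (ln (v t) * (dP - dW) - ln (1 - v t) * (dT - dW)) / 2) (at t)"
    by (intro DERIV_diff DERIV_add DERIV_const has_real_derivative_rogers_dilog_compose[OF DERIV_ident]
        derivs[THEN has_real_derivative_rogers_dilog_compose])
      (use x t args quotients in \<open>auto simp: w_def\<close>)
  \<comment> \<open>Each term is (ln f * (ln (1 - f))' - ln (1 - f) * (ln f)') / 2; expanded in ln x, ln (1 - x),
     ln t, ln (1 - t) and ln w, these antisymmetric expressions cancel identically.\<close>
  moreover have "0 + (ln t * dP - ln (1 - t) * dT) / 2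
         - (ln (x * t) * dW - ln (1 - x * t) * dT) / 2
         - (ln (u t) * (- dW) - ln (1 - u t) * (dP - dW)) / 2
         - (ln (v t) * (dP - dW) - ln (1 - v t) * (dT - dW)) / 2 = 0"
    unfolding w_def[symmetric] logs by (simp add: field_simps)
  ultimately show ?thesis
    unfolding u_def v_def by (rule DERIV_cong)
qed

lemma rogers_dilog_five_term:
  assumes x: "0 < x" "x < 1" and y: "0 < y" "y < 1"
  shows "rogers_dilog x + rogers_dilog y
       = rogers_dilog (x * y) + rogers_dilog (x * (1 - y) / (1 - x * y))
         + rogers_dilog (y * (1 - x) / (1 - x * y))"
proof -
  define g where "g = (\<lambda>t. rogers_dilog x + rogers_dilog t - rogers_dilog (x * t)
      - rogers_dilog (x * (1 - t) / (1 - x * t)) - rogers_dilog (t * (1 - x) / (1 - x * t)))"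
  have "((\<lambda>t. x * t) \<longlongrightarrow> 0) (at_right 0)" "((\<lambda>t. t * (1 - x) / (1 - x * t)) \<longlongrightarrow> 0) (at_right 0)"
    "((\<lambda>t. x * (1 - t) / (1 - x * t)) \<longlongrightarrow> x) (at_right 0)"
    by (auto intro!: tendsto_eq_intros)
  moreover have "eventually (\<lambda>t. 0 < x * t \<and> 0 < t * (1 - x) / (1 - x * t)) (at_right 0)"
    using eventually_at_right_real[of 0 1] x five_term_arguments(6)[OF x]
    by (auto elim!: eventually_mono)
  moreover have "isCont rogers_dilog x"
    using rogers_dilog_has_real_derivative[OF x] by (rule DERIV_isCont)
  ultimately have "(g \<longlongrightarrow> rogers_dilog x + 0 - 0 - rogers_dilog x - 0) (at_right 0)"
    unfolding g_def
    by (intro tendsto_intros tendsto_rogers_dilog_at_right_0 tendsto_rogers_dilog_compose_0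
        isCont_tendsto_compose[of x rogers_dilog]) (auto elim: eventually_mono)
  hence "g y = 0"
    using y unfolding g_def
    by (intro has_real_derivative_zero_imp_eq_limit[where a = 0 and b = 1]
        five_term_defect_has_derivative_zero[OF x]) simp_all
  thus ?thesis
    by (simp add: g_def)
qed

section \<open>The ladder at a root of x^4 + x^3 - 6x^2 + x + 1\<close>

lemma rogers_dilog_reflection_rule:
  assumes "0 < x" "x < 1" "y = 1 - x"
  shows "rogers_dilog x + rogers_dilog y = pi\<^sup>2 / 6"
  using rogers_dilog_reflection[OF assms(1,2)] assms(3) by simp

(* Division-free, so that instances with arguments in Q(r) are checked by multiplication alone. *)
lemma rogers_dilog_five_term_rule:
  assumes "0 < x" "x < 1" "0 < y" "y < 1"
    and "z = x * y" "u * (1 - z) = x * (1 - y)" "v * (1 - z) = y * (1 - x)"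
  shows "rogers_dilog x + rogers_dilog y = rogers_dilog z + rogers_dilog u + rogers_dilog v"
proof -
  have "0 < 1 - x * y"
    using five_term_arguments(1)[OF assms(1-4)] .
  hence "u = x * (1 - y) / (1 - x * y)" "v = y * (1 - x) / (1 - x * y)"
    using assms(5-7) by (simp_all add: field_simps)
  thus ?thesis
    using rogers_dilog_five_term[OF assms(1-4)] assms(5) by simp
qed

locale ladder_base =
  fixes r :: real
  assumes minimal_polynomial: "r ^ 4 = - 1 - r + 6 * r ^ 2 - r ^ 3"
    and lower_bound: "5482301 / 10000000 < r" and upper_bound: "r < 5482305 / 10000000"
begin

definition qr :: "real \<Rightarrow> real \<Rightarrow> real \<Rightarrow> real \<Rightarrow> real" where
  "qr a b c d = a + b * r + c * r ^ 2 + d * r ^ 3"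

lemma power_bounds:
  "30055624254601 / 100000000000000 < r ^ 2" "r ^ 2 < 30055668113025 / 100000000000000"
  "164773978906623316901 / 1000000000000000000000 < r ^ 3"
  "r ^ 3 < 164774339574377522625 / 1000000000000000000000"
proof -
  have "(5482301 / 10000000) ^ n < r ^ n" "r ^ n < (5482305 / 10000000) ^ n" if "n > 0" for n
    using lower_bound upper_bound that by (auto intro!: power_strict_mono)
  from this[of 2] this[of 3] show
    "30055624254601 / 100000000000000 < r ^ 2" "r ^ 2 < 30055668113025 / 100000000000000"
    "164773978906623316901 / 1000000000000000000000 < r ^ 3"
    "r ^ 3 < 164774339574377522625 / 1000000000000000000000"
    by (simp_all add: power_divide)
qed

lemma one_minus_qr: "1 - qr a b c d = qr (1 - a) (- b) (- c) (- d)"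
  by (simp add: qr_def)

lemma qr_mult:
  "qr a b c d * qr e f g h =
    qr (a*e - (b*h + c*g + d*f) + (c*h + d*g) - 7*(d*h))
       (a*f + b*e - (b*h + c*g + d*f) - 6*(d*h))
       (a*g + b*f + c*e + 6*(b*h + c*g + d*f) - 7*(c*h + d*g) + 42*(d*h))
       (a*h + b*g + c*f + d*e - (b*h + c*g + d*f) + 7*(c*h + d*g) - 14*(d*h))"
proof -
  have r5: "r ^ 5 = 1 - 7 * r ^ 2 + 7 * r ^ 3" and r6: "r ^ 6 = - 7 - 6 * r + 42 * r ^ 2 - 14 * r ^ 3"
    using minimal_polynomial by algebra+
  have "qr a b c d * qr e f g h = a*e + (a*f+b*e) * r + (a*g+b*f+c*e) * r^2 + (a*h+b*g+c*f+d*e) * r^3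
        + (b*h+c*g+d*f) * r^4 + (c*h+d*g) * r^5 + (d*h) * r^6"
    unfolding qr_def by (simp add: algebra_simps eval_nat_numeral)
  thus ?thesis
    unfolding minimal_polynomial r5 r6 by (simp add: qr_def algebra_simps)
qed

lemma reflection_relations:
  "rogers_dilog (qr 0 0 1 0) + rogers_dilog (qr 1 0 (-1) 0) = pi\<^sup>2 / 6"
  "rogers_dilog (qr 0 1 (-1) 0) + rogers_dilog (qr 1 (-1) 1 0) = pi\<^sup>2 / 6"
  "rogers_dilog (qr 0 0 0 1) + rogers_dilog (qr 1 0 0 (-1)) = pi\<^sup>2 / 6"
  "rogers_dilog (qr 0 1 0 0) + rogers_dilog (qr 1 (-1) 0 0) = pi\<^sup>2 / 6"
  "rogers_dilog (qr (1/2) (-1/2) (-1/2) (1/2)) + rogers_dilog (qr (1/2) (1/2) (1/2) (-1/2)) = pi\<^sup>2 / 6"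
  "rogers_dilog (qr (1/2) (-1) 1 (1/2)) + rogers_dilog (qr (1/2) 1 (-1) (-1/2)) = pi\<^sup>2 / 6"
  "rogers_dilog (qr (-1) 2 1 0) + rogers_dilog (qr 2 (-2) (-1) 0) = pi\<^sup>2 / 6"
  "rogers_dilog (qr 0 2 (-2) (-1)) + rogers_dilog (qr 1 (-2) 2 1) = pi\<^sup>2 / 6"
  "rogers_dilog (qr (1/2) (-1/2) 0 0) + rogers_dilog (qr (1/2) (1/2) 0 0) = pi\<^sup>2 / 6"
  "rogers_dilog (qr 0 (2/3) (-2/3) (-1/3)) + rogers_dilog (qr 1 (-2/3) (2/3) (1/3)) = pi\<^sup>2 / 6"
  "rogers_dilog (qr (1/3) (2/3) (-2/3) 0) + rogers_dilog (qr (2/3) (-2/3) (2/3) 0) = pi\<^sup>2 / 6"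
  "rogers_dilog (qr 0 (3/2) (-1) (-1/2)) + rogers_dilog (qr 1 (-3/2) 1 (1/2)) = pi\<^sup>2 / 6"
  "rogers_dilog (qr (1/3) 1 (-1) (1/3)) + rogers_dilog (qr (2/3) (-1) 1 (-1/3)) = pi\<^sup>2 / 6"
  "rogers_dilog (qr 0 (-1) 3 1) + rogers_dilog (qr 1 1 (-3) (-1)) = pi\<^sup>2 / 6"
  "rogers_dilog (qr (-1/2) 1 2 (1/2)) + rogers_dilog (qr (3/2) (-1) (-2) (-1/2)) = pi\<^sup>2 / 6"
  "rogers_dilog (qr 0 0 (3/2) (1/2)) + rogers_dilog (qr 1 0 (-3/2) (-1/2)) = pi\<^sup>2 / 6"
  "rogers_dilog (qr (1/3) 0 0 0) + rogers_dilog (qr (2/3) 0 0 0) = pi\<^sup>2 / 6"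
  "rogers_dilog (qr (1/3) 0 1 (1/3)) + rogers_dilog (qr (2/3) 0 (-1) (-1/3)) = pi\<^sup>2 / 6"
  "rogers_dilog (qr (1/3) (-1/3) (1/3) 0) + rogers_dilog (qr (2/3) (1/3) (-1/3) 0) = pi\<^sup>2 / 6"
  "rogers_dilog (qr (-1/2) 1 (1/2) 0) + rogers_dilog (qr (3/2) (-1) (-1/2) 0) = pi\<^sup>2 / 6"
  "rogers_dilog (qr (1/4) 0 (1/4) 0) + rogers_dilog (qr (3/4) 0 (-1/4) 0) = pi\<^sup>2 / 6"
  "rogers_dilog (qr (1/4) 1 0 (-1/4)) + rogers_dilog (qr (3/4) (-1) 0 (1/4)) = pi\<^sup>2 / 6"
  "rogers_dilog (qr (1/4) (1/4) (1/4) 0) + rogers_dilog (qr (3/4) (-1/4) (-1/4) 0) = pi\<^sup>2 / 6"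
  "rogers_dilog (qr (-2) 5 (-1) (-1)) + rogers_dilog (qr 3 (-5) 1 1) = pi\<^sup>2 / 6"
  "rogers_dilog (qr (-3/2) 4 0 (-1/2)) + rogers_dilog (qr (5/2) (-4) 0 (1/2)) = pi\<^sup>2 / 6"
  "rogers_dilog (qr (-1/2) (5/2) (-1/2) (-1/2)) + rogers_dilog (qr (3/2) (-5/2) (1/2) (1/2)) = pi\<^sup>2 / 6"
  "rogers_dilog (qr (-2/3) 3 (-1) (-2/3)) + rogers_dilog (qr (5/3) (-3) 1 (2/3)) = pi\<^sup>2 / 6"
  "rogers_dilog (qr (-2) 5 0 (-1)) + rogers_dilog (qr 3 (-5) 0 1) = pi\<^sup>2 / 6"
  "rogers_dilog (qr (-1) 6 (-4) (-2)) + rogers_dilog (qr 2 (-6) 4 2) = pi\<^sup>2 / 6"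
  "rogers_dilog (qr (1/3) (1/2) 0 (-1/6)) + rogers_dilog (qr (2/3) (-1/2) 0 (1/6)) = pi\<^sup>2 / 6"
  by (rule rogers_dilog_reflection_rule;
      ((simp only: one_minus_qr, simp)
       | (unfold qr_def, insert lower_bound upper_bound power_bounds, linarith)))+

lemma five_term_relations:
  "rogers_dilog (qr (-1) 2 1 0) + rogers_dilog (qr (1/2) 0 0 0)
     = rogers_dilog (qr (-1/2) 1 (1/2) 0) + rogers_dilog (qr 0 1 (-1) 0) + rogers_dilog (qr (1/2) (-1/2) (1/2) 0)"
  "rogers_dilog (qr (-1) 2 1 0) + rogers_dilog (qr (1/2) (1/2) (-1/2) 0)
     = rogers_dilog (qr 0 1 (-1) 0) + rogers_dilog (qr (-1/2) 1 (1/2) 0) + rogers_dilog (qr (1/2) 0 0 0)"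
  "rogers_dilog (qr 1 (-1) 0 0) + rogers_dilog (qr 1 (-1) 0 0)
     = rogers_dilog (qr 1 (-2) 1 0) + rogers_dilog (qr (2/3) 0 (-1) (-1/3)) + rogers_dilog (qr (2/3) 0 (-1) (-1/3))"
  "rogers_dilog (qr 0 1 0 0) + rogers_dilog (qr (1/3) 0 1 (1/3))
     = rogers_dilog (qr (-1/3) 0 2 (2/3)) + rogers_dilog (qr 0 (1/2) 0 0) + rogers_dilog (qr (1/2) 0 0 0)"
  "rogers_dilog (qr (-1/3) 0 2 (2/3)) + rogers_dilog (qr 0 2 (-1) 0)
     = rogers_dilog (qr 0 0 1 0) + rogers_dilog (qr 0 (2/3) (-2/3) (-1/3)) + rogers_dilog (qr (-1/3) 2 0 (-1/3))"
  "rogers_dilog (qr (1/3) 0 1 (1/3)) + rogers_dilog (qr (1/2) (1/2) 0 0)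
     = rogers_dilog (qr 0 0 (3/2) (1/2)) + rogers_dilog (qr (1/3) 0 0 0) + rogers_dilog (qr (1/3) (1/3) 0 0)"
  "rogers_dilog (qr (1/2) (1/2) 0 0) + rogers_dilog (qr 1 (-2) 1 0)
     = rogers_dilog (qr (1/2) (-1/2) (-1/2) (1/2)) + rogers_dilog (qr (-1/2) 1 2 (1/2)) + rogers_dilog (qr 2 (-3) (-1) 0)"
  "rogers_dilog (qr 1 (-1) 1 0) + rogers_dilog (qr 1 (-2/3) (2/3) (1/3))
     = rogers_dilog (qr 1 (-2) 2 1) + rogers_dilog (qr (1/3) (-1/3) (1/3) 0) + rogers_dilog (qr (2/3) 0 0 0)"
  "rogers_dilog (qr (-3/4) 2 0 (-1/4)) + rogers_dilog (qr 1 (-2) 1 0)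
     = rogers_dilog (qr (-3/2) 3 0 (-1/2)) + rogers_dilog (qr 0 (-1/2) (3/2) (1/2)) + rogers_dilog (qr 1 (-1) (-1) 0)"
  "rogers_dilog (qr 0 (-1) 3 1) + rogers_dilog (qr (1/2) 0 0 0)
     = rogers_dilog (qr 0 (-1/2) (3/2) (1/2)) + rogers_dilog (qr (1/2) 0 (-1/2) 0) + rogers_dilog (qr (1/4) 0 (1/4) 0)"
  "rogers_dilog (qr 0 1 0 0) + rogers_dilog (qr (1/3) (1/3) 0 0)
     = rogers_dilog (qr 0 (1/3) (1/3) 0) + rogers_dilog (qr 0 (3/4) 0 (-1/4)) + rogers_dilog (qr (1/4) 0 (1/4) 0)"
  "rogers_dilog (qr 0 (3/2) (-1) (-1/2)) + rogers_dilog (qr (1/2) (1/2) (1/2) (-1/2))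
     = rogers_dilog (qr 0 (3/4) 0 (-1/4)) + rogers_dilog (qr 0 (2/3) (-2/3) (-1/3)) + rogers_dilog (qr (2/3) (1/3) (-1/3) 0)"
  "rogers_dilog (qr (1/3) (2/3) (1/3) 0) + rogers_dilog (qr (1/2) (1/2) (-1/2) 0)
     = rogers_dilog (qr (1/3) (2/3) (-2/3) 0) + rogers_dilog (qr (1/4) (1/2) (1/4) 0) + rogers_dilog (qr (1/4) 0 0 0)"
  "rogers_dilog (qr (1/2) (-1/2) 0 0) + rogers_dilog (qr (1/2) 0 0 0)
     = rogers_dilog (qr (1/4) (-1/4) 0 0) + rogers_dilog (qr 1 0 (-4) 2) + rogers_dilog (qr 0 0 2 (-1))"
  "rogers_dilog (qr (1/2) (-1/2) 0 0) + rogers_dilog (qr 1 (-2) 2 1)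
     = rogers_dilog (qr 1 (-1) (-1) 0) + rogers_dilog (qr (3/2) (-3) (1/2) (1/2)) + rogers_dilog (qr (-3/2) 4 0 (-1/2))"
  "rogers_dilog (qr (1/2) 0 0 0) + rogers_dilog (qr (1/2) 0 0 0)
     = rogers_dilog (qr (1/4) 0 0 0) + rogers_dilog (qr (1/3) 0 0 0) + rogers_dilog (qr (1/3) 0 0 0)"
  "rogers_dilog (qr (1/2) 0 0 0) + rogers_dilog (qr (2/3) (-2/3) (2/3) 0)
     = rogers_dilog (qr (1/3) (-1/3) (1/3) 0) + rogers_dilog (qr (1/4) (1/2) (-1/2) (-1/4)) + rogers_dilog (qr (1/2) (-1) 1 (1/2))"
  "rogers_dilog (qr (1/2) (1/2) (-1/2) 0) + rogers_dilog (qr 1 0 (-1) 0)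
     = rogers_dilog (qr 0 0 2 (-1)) + rogers_dilog (qr (1/4) (1/2) (-1/2) (-1/4)) + rogers_dilog (qr 1 0 (-3/2) (-1/2))"
  "rogers_dilog (qr (1/2) (1/2) 0 0) + rogers_dilog (qr (1/2) (1/2) 0 0)
     = rogers_dilog (qr (1/4) (1/2) (1/4) 0) + rogers_dilog (qr 0 0 2 (-1)) + rogers_dilog (qr 0 0 2 (-1))"
  "rogers_dilog (qr (3/4) (-1/4) (-1/4) 0) + rogers_dilog (qr 1 0 (-1) 0)
     = rogers_dilog (qr (1/2) (-1/2) (1/2) 0) + rogers_dilog (qr 0 (-1/2) (3/2) (1/2)) + rogers_dilog (qr 0 (-1) 3 1)"
  "rogers_dilog (qr 0 1 0 0) + rogers_dilog (qr 0 2 (-1) 0)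
     = rogers_dilog (qr 0 0 2 (-1)) + rogers_dilog (qr (-1/2) 1 (1/2) 0) + rogers_dilog (qr (-1/2) (5/2) (-1/2) (-1/2))"
  "rogers_dilog (qr (-1) 2 1 0) + rogers_dilog (qr (-1) (5/2) (-1/2) (-1/2))
     = rogers_dilog (qr 2 (-3) (-1) 0) + rogers_dilog (qr (3/2) (-5/2) (1/2) (1/2)) + rogers_dilog (qr (3/2) (-3) (1/2) (1/2))"
  "rogers_dilog (qr (-1/2) 1 (1/2) 0) + rogers_dilog (qr 0 (5/4) (-1/4) (-1/4))
     = rogers_dilog (qr (1/4) (-1/4) 0 0) + rogers_dilog (qr (-1) 2 0 0) + rogers_dilog (qr (-1/2) 2 0 (-1/2))"
  "rogers_dilog (qr (-1/2) 1 2 (1/2)) + rogers_dilog (qr 1 (-1) 0 0)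
     = rogers_dilog (qr 0 2 (-2) (-1)) + rogers_dilog (qr (1/4) (1/2) (1/4) 0) + rogers_dilog (qr (3/4) (-5/4) (1/4) (1/4))"
  "rogers_dilog (qr (-1/2) 2 0 (-1/2)) + rogers_dilog (qr (3/2) (-1) (-2) (-1/2))
     = rogers_dilog (qr (-1) (5/2) (-1/2) (-1/2)) + rogers_dilog (qr 0 0 2 (-1)) + rogers_dilog (qr 1 (-1) (-1) 0)"
  "rogers_dilog (qr (1/4) 1 0 (-1/4)) + rogers_dilog (qr (3/2) (-5/2) (1/2) (1/2))
     = rogers_dilog (qr 0 (1/2) 0 0) + rogers_dilog (qr (1/2) 1 (-1) (-1/2)) + rogers_dilog (qr 1 (-3) 2 1)"
  "rogers_dilog (qr (1/3) (1/3) 0 0) + rogers_dilog (qr 2 (-2) (-1) 0)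
     = rogers_dilog (qr (2/3) 0 (-1) (-1/3)) + rogers_dilog (qr (-1/3) (4/3) (-1/3) 0) + rogers_dilog (qr 3 (-5) 0 1)"
  "rogers_dilog (qr (1/3) (2/3) (-2/3) 0) + rogers_dilog (qr 2 (-2) (-1) 0)
     = rogers_dilog (qr 0 0 1 0) + rogers_dilog (qr 0 (1/3) (1/3) 0) + rogers_dilog (qr (5/3) (-3) 1 (2/3))"
  "rogers_dilog (qr (1/2) 0 (-1/2) 0) + rogers_dilog (qr (3/2) (-1) (-1/2) 0)
     = rogers_dilog (qr (1/2) (-3/4) (1/2) (1/4)) + rogers_dilog (qr (-1) 2 0 0) + rogers_dilog (qr 3 (-5) 1 1)"
  "rogers_dilog (qr (1/2) 0 0 0) + rogers_dilog (qr 1 (-3/2) 1 (1/2))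
     = rogers_dilog (qr (1/2) (-3/4) (1/2) (1/4)) + rogers_dilog (qr (-3/4) 2 0 (-1/4)) + rogers_dilog (qr (5/2) (-4) 0 (1/2))"
  "rogers_dilog (qr (1/2) (1/2) (1/2) (-1/2)) + rogers_dilog (qr (3/2) (-1) (-1/2) 0)
     = rogers_dilog (qr (3/4) 0 (-1/4) 0) + rogers_dilog (qr (-1/2) 2 0 (-1/2)) + rogers_dilog (qr (5/2) (-4) 0 (1/2))"
  "rogers_dilog (qr (3/4) (-1/4) (-1/4) 0) + rogers_dilog (qr 1 (-1) 0 0)
     = rogers_dilog (qr (3/4) (-1) 0 (1/4)) + rogers_dilog (qr (5/2) (-4) 0 (1/2)) + rogers_dilog (qr (-2) 5 (-1) (-1))"
  "rogers_dilog (qr 1 (-2) 1 0) + rogers_dilog (qr 1 (-5/4) (1/4) (1/4))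
     = rogers_dilog (qr (3/2) (-3) (1/2) (1/2)) + rogers_dilog (qr 1 0 (-4) 2) + rogers_dilog (qr (1/2) (-1/2) (1/2) 0)"
  "rogers_dilog (qr 0 1 0 0) + rogers_dilog (qr 0 1 0 0)
     = rogers_dilog (qr 0 0 1 0) + rogers_dilog (qr (-1/6) 1 0 (-1/6)) + rogers_dilog (qr (-1/6) 1 0 (-1/6))"
  "rogers_dilog (qr (-1/2) 1 (1/2) 0) + rogers_dilog (qr (-1/6) 1 0 (-1/6))
     = rogers_dilog (qr (1/6) (-1/2) (1/2) (1/6)) + rogers_dilog (qr (-1) (5/2) (-1/2) (-1/2)) + rogers_dilog (qr (-3/4) 2 0 (-1/4))"
  "rogers_dilog (qr (-1/6) 1 0 (-1/6)) + rogers_dilog (qr 0 1 0 0)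
     = rogers_dilog (qr (1/6) 0 0 (1/6)) + rogers_dilog (qr (-1/2) 1 (1/2) 0) + rogers_dilog (qr 0 (3/2) (-1) (-1/2))"
  "rogers_dilog (qr (-1/6) 1 0 (-1/6)) + rogers_dilog (qr (1/6) (1/3) (1/6) 0)
     = rogers_dilog (qr 0 (1/6) (1/6) 0) + rogers_dilog (qr 0 1 (-1) 0) + rogers_dilog (qr 0 0 1 0)"
  "rogers_dilog (qr (-1/6) 1 0 (-1/6)) + rogers_dilog (qr (2/3) 0 (-1) (-1/3))
     = rogers_dilog (qr 0 (2/3) (-2/3) (-1/3)) + rogers_dilog (qr 0 (1/2) 0 0) + rogers_dilog (qr (1/2) (-1/2) 0 0)"
  "rogers_dilog (qr (1/3) 0 1 (1/3)) + rogers_dilog (qr 1 0 (-1) 0)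
     = rogers_dilog (qr 1 1 (-3) (-1)) + rogers_dilog (qr (1/6) (1/3) (1/6) 0) + rogers_dilog (qr (2/3) (-1/2) 0 (1/6))"
  "rogers_dilog (qr 1 0 0 (-1)) + rogers_dilog (qr (3/2) (-1) (-1/2) 0)
     = rogers_dilog (qr 1 (-2) 2 1) + rogers_dilog (qr (2/3) (-2/3) (2/3) 0) + rogers_dilog (qr (1/6) (1/3) (1/6) 0)"
  "rogers_dilog (qr (-1) 6 (-4) (-2)) + rogers_dilog (qr (1/3) (1/2) 0 (-1/6))
     = rogers_dilog (qr 0 (3/2) (-1) (-1/2)) + rogers_dilog (qr (-2/3) 3 (-1) (-2/3)) + rogers_dilog (qr (1/3) (-1/3) (1/3) 0)"
  "rogers_dilog (qr (-1) 6 (-4) (-2)) + rogers_dilog (qr (1/3) (2/3) (-2/3) 0)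
     = rogers_dilog (qr (-1/3) 0 2 (2/3)) + rogers_dilog (qr (-3/2) 4 0 (-1/2)) + rogers_dilog (qr (1/6) 0 0 (1/6))"
  "rogers_dilog (qr (-3/4) 2 0 (-1/4)) + rogers_dilog (qr (2/3) (-1/2) 0 (1/6))
     = rogers_dilog (qr (-2/3) (3/2) 0 (-1/6)) + rogers_dilog (qr (1/4) (3/4) (-5/4) (-1/2)) + rogers_dilog (qr (1/2) (-1) 1 (1/2))"
  "rogers_dilog (qr (-3/4) 2 0 (-1/4)) + rogers_dilog (qr 1 (-1) 0 0)
     = rogers_dilog (qr (-1) (5/2) (-1/2) (-1/2)) + rogers_dilog (qr (1/6) 0 0 (1/6)) + rogers_dilog (qr (2/3) (-1) 1 (-1/3))"
  "rogers_dilog (qr (-2/3) (3/2) 0 (-1/6)) + rogers_dilog (qr 0 1 0 0)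
     = rogers_dilog (qr (1/6) (-1/2) (1/2) (1/6)) + rogers_dilog (qr (-3/2) 3 0 (-1/2)) + rogers_dilog (qr (-1/2) 2 0 (-1/2))"
  "rogers_dilog (qr (-1/2) 2 0 (-1/2)) + rogers_dilog (qr (1/3) 0 1 (1/3))
     = rogers_dilog (qr (-1/6) 1 0 (-1/6)) + rogers_dilog (qr 0 1 (-1) 0) + rogers_dilog (qr 0 (-1) 3 1)"
  "rogers_dilog (qr (-1/3) 0 2 (2/3)) + rogers_dilog (qr (1/3) (1/2) 0 (-1/6))
     = rogers_dilog (qr 0 (1/6) (1/3) (1/6)) + rogers_dilog (qr (1/4) (3/4) (-5/4) (-1/2)) + rogers_dilog (qr (1/4) (1/4) (1/4) 0)"
  "rogers_dilog (qr (-1/3) 2 0 (-1/3)) + rogers_dilog (qr (-1/6) 1 0 (-1/6))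
     = rogers_dilog (qr (1/3) (-1/3) (1/3) 0) + rogers_dilog (qr (-3/2) 4 0 (-1/2)) + rogers_dilog (qr (-1) (5/2) (-1/2) (-1/2))"
  "rogers_dilog (qr (-1/3) 2 0 (-1/3)) + rogers_dilog (qr 1 (-5/4) (1/4) (1/4))
     = rogers_dilog (qr (-3/4) 2 0 (-1/4)) + rogers_dilog (qr (1/3) (1/2) 0 (-1/6)) + rogers_dilog (qr (3/4) (-5/4) (1/4) (1/4))"
  "rogers_dilog (qr 0 (1/6) (1/3) (1/6)) + rogers_dilog (qr 0 1 (-1) 1)
     = rogers_dilog (qr (-1) (-1) 6 (-1)) + rogers_dilog (qr 0 (1/6) (1/6) 0) + rogers_dilog (qr (-1/6) 1 0 (-1/6))"
  "rogers_dilog (qr 0 (5/4) (-1/4) (-1/4)) + rogers_dilog (qr 2 (-6) 4 2)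
     = rogers_dilog (qr (-1) (5/2) (-1/2) (-1/2)) + rogers_dilog (qr (1/2) 0 0 0) + rogers_dilog (qr 1 (-3) 2 1)"
  "rogers_dilog (qr 0 2 (-1) 0) + rogers_dilog (qr (1/3) (2/3) (1/3) 0)
     = rogers_dilog (qr (1/3) 1 (-1) (1/3)) + rogers_dilog (qr 0 (3/2) (-1) (-1/2)) + rogers_dilog (qr (-1/6) (-1/2) (5/2) (5/6))"
  "rogers_dilog (qr 0 1 0 0) + rogers_dilog (qr (1/6) (7/6) (-1/6) (-1/6))
     = rogers_dilog (qr (1/6) (1/3) (1/6) 0) + rogers_dilog (qr 0 1 (-1) 0) + rogers_dilog (qr 0 1 0 0)"
  "rogers_dilog (qr 0 (3/2) (-1) (-1/2)) + rogers_dilog (qr 0 2 (-1) 0)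
     = rogers_dilog (qr (1/2) 0 (-1/2) 0) + rogers_dilog (qr (-1) (5/2) (-1/2) (-1/2)) + rogers_dilog (qr (-1) (7/2) (-1/2) (-1/2))"
  "rogers_dilog (qr (-1) (7/2) (-1/2) (-1/2)) + rogers_dilog (qr (-1/3) 0 2 (2/3))
     = rogers_dilog (qr 0 (-1/2) (3/2) (1/2)) + rogers_dilog (qr (-2) 5 0 (-1)) + rogers_dilog (qr (-1/3) 1 0 (-1/3))"
  "rogers_dilog (qr (-1/2) 1 2 (1/2)) + rogers_dilog (qr 0 (7/6) 0 (-1/6))
     = rogers_dilog (qr (-1/6) (-1/2) (5/2) (5/6)) + rogers_dilog (qr (-1/2) 2 0 (-1/2)) + rogers_dilog (qr (-1/3) (4/3) (-1/3) 0)"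
  "rogers_dilog (qr 0 1 (-1) 1) + rogers_dilog (qr (1/6) (7/6) (-1/6) (-1/6))
     = rogers_dilog (qr 0 0 1 0) + rogers_dilog (qr (-1/3) 1 0 (-1/3)) + rogers_dilog (qr 0 (7/6) 0 (-1/6))"
  "rogers_dilog (qr 0 0 0 1) + rogers_dilog (qr 0 0 0 1)
     = rogers_dilog (qr (-7) (-6) 42 (-14)) + rogers_dilog (qr 0 (1/6) (1/6) 0) + rogers_dilog (qr 0 (1/6) (1/6) 0)"
  by (rule rogers_dilog_five_term_rule;
      ((simp only: one_minus_qr qr_mult, simp)
       | (unfold qr_def, insert lower_bound upper_bound power_bounds, linarith)))+

lemma rogers_ladder:
  "3 * rogers_dilog (r ^ 6) + 3 * rogers_dilog (r ^ 4) - 8 * rogers_dilog (r ^ 3)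
     - 33 * rogers_dilog (r ^ 2) + 24 * rogers_dilog r = pi\<^sup>2 / 6"
proof -
  have powers: "qr (-7) (-6) 42 (-14) = r ^ 6" "qr (-1) (-1) 6 (-1) = r ^ 4"
      "qr 0 0 0 1 = r ^ 3" "qr 0 0 1 0 = r ^ 2" "qr 0 1 0 0 = r"
    unfolding qr_def using minimal_polynomial by simp_all algebra
  have "3 * rogers_dilog (qr (-7) (-6) 42 (-14)) + 3 * rogers_dilog (qr (-1) (-1) 6 (-1))
      - 8 * rogers_dilog (qr 0 0 0 1) - 33 * rogers_dilog (qr 0 0 1 0) + 24 * rogers_dilog (qr 0 1 0 0)
      = pi\<^sup>2 / 6"
    \<comment> \<open>an integer combination of the relations, found by linear algebra over their arguments\<close>
    using reflection_relations five_term_relations by argo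
  thus ?thesis
    by (simp only: powers)
qed

lemma cyclotomic_identity:
  "r ^ 2 * (1 - r ^ 6) ^ 3 * (1 - r ^ 4) ^ 2 * (1 - r) ^ 4 = (1 - r ^ 3) ^ 4 * (1 - r ^ 2) ^ 11"
  using minimal_polynomial by algebra

lemma ln_one_minus_powers:
  "18 * ln (1 - r ^ 6) + 12 * ln (1 - r ^ 4) - 24 * ln (1 - r ^ 3) - 66 * ln (1 - r ^ 2)
     + 24 * ln (1 - r) = - 12 * ln r"
proof -
  have "0 < r" "r < 1"
    using lower_bound upper_bound by linarith+
  hence "r ^ n \<noteq> 1" if "0 < n" for n
    using that power_less_one_iff[of r n] by simp
  hence "2 * ln r + 3 * ln (1 - r ^ 6) + 2 * ln (1 - r ^ 4) + 4 * ln (1 - r)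
      = 4 * ln (1 - r ^ 3) + 11 * ln (1 - r ^ 2)"
    using arg_cong[OF cyclotomic_identity, of ln] \<open>0 < r\<close> \<open>r < 1\<close>
    by (simp add: ln_mult ln_realpow)
  thus ?thesis
    by linarith
qed

lemma Li2_ladder:
  "3 * Li2 (r ^ 6) + 3 * Li2 (r ^ 4) - 8 * Li2 (r ^ 3) - 33 * Li2 (r ^ 2) + 24 * Li2 r - pi\<^sup>2 / 6
     = 6 * (ln r)\<^sup>2"
proof -
  have Li2: "Li2 x = rogers_dilog x - ln x * ln (1 - x) / 2" for x
    by (simp add: rogers_dilog_def)
  have "3 * Li2 (r ^ 6) + 3 * Li2 (r ^ 4) - 8 * Li2 (r ^ 3) - 33 * Li2 (r ^ 2) + 24 * Li2 r - pi\<^sup>2 / 6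
      = (3 * rogers_dilog (r ^ 6) + 3 * rogers_dilog (r ^ 4) - 8 * rogers_dilog (r ^ 3)
           - 33 * rogers_dilog (r ^ 2) + 24 * rogers_dilog r - pi\<^sup>2 / 6)
        - ln r * (18 * ln (1 - r ^ 6) + 12 * ln (1 - r ^ 4) - 24 * ln (1 - r ^ 3)
           - 66 * ln (1 - r ^ 2) + 24 * ln (1 - r)) / 2"
    by (simp add: Li2 ln_realpow field_simps)
  also have "\<dots> = 6 * (ln r)\<^sup>2"
    unfolding rogers_ladder ln_one_minus_powers by (simp add: power2_eq_square)
  finally show ?thesis .
qed

end

lemma ladder_base_closed_form:
  assumes "r = (-1 + sqrt 33 - sqrt (2 * (9 - sqrt 33))) / 4"
  shows "ladder_base r"
proof
  define s where "s = sqrt 33"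
  define q where "q = sqrt (2 * (9 - s))"
  have s_bounds: "5744562646 / 1000000000 < s" "s < 5744562647 / 1000000000"
    unfolding s_def by (rule real_less_rsqrt real_less_lsqrt; simp add: power2_eq_square)+
  have q_bounds: "2551641 / 1000000 < q" "q < 2551642 / 1000000"
    unfolding q_def by (rule real_less_rsqrt real_less_lsqrt; use s_bounds in \<open>simp add: power2_eq_square\<close>)+
  have r: "4 * r = -1 + s - q"
    using assms by (simp add: s_def q_def)
  show "5482301 / 10000000 < r" "r < 5482305 / 10000000"
    using r s_bounds q_bounds by linarith+
  have "s ^ 2 = 33" "q ^ 2 = 2 * (9 - s)"
    using s_bounds by (simp_all add: s_def q_def)
  moreover have "4 * r + 1 - s = - q"
    using r by linarith
  ultimately have "s ^ 2 = 33" "(4 * r + 1 - s) ^ 2 = 2 * (9 - s)"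
    by simp_all
  hence "r * s = 2 * r ^ 2 + r + 2"
    unfolding power2_eq_square by (simp add: algebra_simps)
  hence "(2 * r ^ 2 + r + 2) ^ 2 = 33 * r ^ 2"
    using \<open>s ^ 2 = 33\<close> by (metis power_mult_distrib mult.commute)
  thus "r ^ 4 = - 1 - r + 6 * r ^ 2 - r ^ 3"
    by algebra
qed

theorem mainTheorem3:
  fixes r :: real
  assumes "r = (-1 + sqrt 33 - sqrt (2 * (9 - sqrt 33))) / 4"
  shows "3 * Li2 (r ^ 6) + 3 * Li2 (r ^ 4) - 8 * Li2 (r ^ 3) - 33 * Li2 (r ^ 2)
           + 24 * Li2 r - zeta2 = 6 * (ln r)\<^sup>2"
proof -
  interpret ladder_base r
    using assms by (rule ladder_base_closed_form)
  show ?thesis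
    using Li2_ladder by (simp add: zeta2_def)
qed

end
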